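(* Let $G = (V, E, b, c)$ be a weighted hypergraph and run procedure COVER on the stream of its edges. For every integer $r$, the edge collection $S(> r) = \{ e \in E \mid \exists v \in V \text{ with } \mathrm{eff}_\infty(v) > r \text{ and } \mathrm{eid}_\infty(v) = \mathrm{id}(e) \}$ satisfies \[ c(S(> r)) < b(V) / 2^{r-1}. \]
   Context: A weighted hypergraph $G = (V, E, b, c)$ has vertex set $V$, a multiset $E$ of non-empty edges $e \subseteq V$, benefits $b : V \to \mathbb{Q}_{>0}$ and costs $c : E \to \mathbb{Q}_{>0}$; $b(U) = \sum_{v \in U} b(v)$, $c(F) = \sum_{e \in F} c(e)$. Edges arrive in a stream $e_0, e_1, \dots$, and $\mathrm{id}(e)$ is a unique identifier of edge $e$. Procedure COVER maintains for each $v \in V$ a variable $\mathrm{eid}(v)$ (initially NULL) and an integer variable $\mathrm{eff}(v)$ (initially $-\infty$); $\mathrm{eff}_t(v)$ denotes its value just before $e_t$ is processed, and $\mathrm{eff}_\infty(v)$, $\mathrm{eid}_\infty(v)$ the values after the whole stream has been processed. For $T \subseteq e_t$ the level is $\mathrm{lev}_t(T) = \lceil \lg (b(T)/c(e_t)) \rceil$ ($\lg$ = base-2 logarithm), and $T$ is effective at time $t$ if $\mathrm{lev}_t(T) > \mathrm{eff}_t(v)$ for every $v \in T$ (the empty set is vacuously effective). When $e_t$ arrives, COVER computes an effective subset $T \subseteq e_t$ of largest benefit $b(T)$ (any such subset) and, for every $v \in T$, sets $\mathrm{eid}(v) \leftarrow \mathrm{id}(e_t)$ and $\mathrm{eff}(v)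 \leftarrow \mathrm{lev}_t(T)$. *)

theory Defs
  imports Complex_Main "HOL-Library.Extended_Real"
begin

text \<open>A weighted hypergraph: finite vertex set V, edge stream es (a list; the edge
  multiset E is the multiset of its entries), benefits b on vertices, costs c indexed by
  stream position. The identifier of the edge e_t is its position t.\<close>

definition weighted_hypergraph ::
  "'v set \<Rightarrow> 'v set list \<Rightarrow> ('v \<Rightarrow> rat) \<Rightarrow> (nat \<Rightarrow> rat) \<Rightarrow> bool" where
  "weighted_hypergraph V es b c \<longleftrightarrow> finite V \<and> V \<noteq> {} \<and>
     (\<forall>t<length es. es ! t \<noteq> {} \<and> es ! t \<subseteq> V \<and> c t > 0) \<and>
     (\<forall>v\<in>V. b v > 0)"

text \<open>State of COVER: (eid, eff); eid v = None means NULL, eff v = -\<infinity> initially.\<close>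
type_synonym 'v cover_state = "('v \<Rightarrow> nat option) \<times> ('v \<Rightarrow> ereal)"

definition cover_init :: "'v cover_state" where
  "cover_init = ((\<lambda>_. None), (\<lambda>_. -\<infinity>))"

definition lev :: "('v \<Rightarrow> rat) \<Rightarrow> (nat \<Rightarrow> rat) \<Rightarrow> nat \<Rightarrow> 'v set \<Rightarrow> int" where
  "lev b c t T = \<lceil>log 2 (real_of_rat (sum b T / c t))\<rceil>"

definition effective ::
  "('v \<Rightarrow> rat) \<Rightarrow> (nat \<Rightarrow> rat) \<Rightarrow> nat \<Rightarrow> ('v \<Rightarrow> ereal) \<Rightarrow> 'v set \<Rightarrow> bool" where
  "effective b c t eff T \<longleftrightarrow> (\<forall>v\<in>T. ereal (real_of_int (lev b c t T)) > eff v)"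

definition cover_step ::
  "('v \<Rightarrow> rat) \<Rightarrow> (nat \<Rightarrow> rat) \<Rightarrow> 'v set list \<Rightarrow> nat \<Rightarrow> 'v cover_state \<Rightarrow> 'v cover_state \<Rightarrow> bool" where
  "cover_step b c es t s s' \<longleftrightarrow>
     (\<exists>T. T \<subseteq> es ! t \<and> effective b c t (snd s) T \<and>
        (\<forall>T'. T' \<subseteq> es ! t \<and> effective b c t (snd s) T' \<longrightarrow> sum b T' \<le> sum b T) \<and>
        s' = ((\<lambda>v. if v \<in> T then Some t else fst s v),
              (\<lambda>v. if v \<in> T then ereal (real_of_int (lev b c t T)) else snd s v)))"

text \<open>st t is the state just before e_t is processed; st (length es) is the final state.\<close>
definition cover_run ::
  "('v \<Rightarrow> rat) \<Rightarrow> (nat \<Rightarrow> rat) \<Rightarrow> 'v set list \<Rightarrow> (nat \<Rightarrow> 'v cover_state) \<Rightarrow> bool" where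
  "cover_run b c es st \<longleftrightarrow> st 0 = cover_init \<and>
     (\<forall>t<length es. cover_step b c es t (st t) (st (Suc t)))"

definition S_gt ::
  "'v set \<Rightarrow> 'v set list \<Rightarrow> 'v cover_state \<Rightarrow> int \<Rightarrow> nat set" where
  "S_gt V es fin r = {t. t < length es \<and>
     (\<exists>v\<in>V. snd fin v > ereal (real_of_int r) \<and> fst fin v = Some t)}"

end

theory Submission
  imports Defs
begin

text \<open>
  Every step that writes a vertex v raises eff(v) to the level of the chosen set, and a set
  can only be chosen at a level exceeding the current eff of its members. Hence the steps
  touching a fixed vertex have strictly increasing levels. A step of level L pays
  c(e_t) < b(T) / 2^(L-1); distributing this over the vertices of T, a vertex v is charged
  b(v) 2^(1-L) for each step of level L > r touching it, in total at most b(v) / 2^(r-1). Finally eff_\<infinity>(v) is the level of the step that last wrote eid_\<infinity>(v),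
  so only steps of level > r can own an edge of S(>r).
\<close>

definition cover_update ::
  "('v \<Rightarrow> rat) \<Rightarrow> (nat \<Rightarrow> rat) \<Rightarrow> nat \<Rightarrow> 'v set \<Rightarrow> 'v cover_state \<Rightarrow> 'v cover_state" where
  "cover_update b c t T s =
     ((\<lambda>v. if v \<in> T then Some t else fst s v),
      (\<lambda>v. if v \<in> T then ereal (real_of_int (lev b c t T)) else snd s v))"

lemma cover_run_choices:
  assumes "cover_run b c es st"
  obtains T where "\<And>t. t < length es \<Longrightarrow> T t \<subseteq> es ! t"
    and "\<And>t. t < length es \<Longrightarrow> effective b c t (snd (st t)) (T t)"
    and "\<And>t. t < length es \<Longrightarrow> st (Suc t) = cover_update b c t (T t) (st t)"
proof -
  have "\<forall>t\<in>{..<length es}. \<exists>T. T \<subseteq> es ! t \<and> effective b c t (snd (st t)) T \<and>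
          st (Suc t) = cover_update b c t T (st t)"
    using assms unfolding cover_run_def cover_step_def cover_update_def by blast
  from bchoice[OF this] show ?thesis
    using that by auto
qed

lemma cost_less_benefit_times_two_powr_lev:
  assumes "0 < sum b T" and "0 < c t"
  shows "real_of_rat (c t) < real_of_rat (sum b T) * 2 powr (1 - real_of_int (lev b c t T))"
proof -
  define B C where "B = real_of_rat (sum b T)" and "C = real_of_rat (c t)"
  have pos: "0 < B" "0 < C"
    using assms by (simp_all add: B_def C_def)
  have "lev b c t T = \<lceil>log 2 (B / C)\<rceil>"
    by (simp add: lev_def B_def C_def of_rat_divide)
  then have "real_of_int (lev b c t T) - 1 < log 2 (B / C)"
    by linarith
  then have "2 powr (real_of_int (lev b c t T) - 1) < B / C"
    using pos by (simp add: less_log_iff)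
  then show ?thesis
    using pos by (simp add: B_def[symmetric] C_def[symmetric] powr_diff field_simps)
qed

lemma sum_two_powr_distinct_levels_le:
  fixes L :: "int set"
  assumes "finite L" and "\<And>l. l \<in> L \<Longrightarrow> r < l"
  shows "(\<Sum>l\<in>L. 2 powr (1 - real_of_int l)) \<le> 2 powr (1 - real_of_int r)"
proof -
  define k where "k l = nat (l - r - 1)" for l
  have inj: "inj_on k L"
    using assms(2) unfolding inj_on_def k_def by (smt (verit) nat_eq_iff2)
  have split: "2 powr (1 - real_of_int l) = 2 powr (1 - real_of_int r) / 2 * (1/2) ^ k l"
    if "l \<in> L" for l
  proof -
    have "1 - real_of_int l = (1 - real_of_int r) - 1 - real (k l)"
      using assms(2)[OF that] by (simp add: k_def)
    then show ?thesis
      by (simp add: powr_diff powr_realpow power_one_over powr_minus_divide)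
  qed
  have "(\<Sum>l\<in>L. (1/2::real) ^ k l) = (\<Sum>j\<in>k ` L. (1/2) ^ j)"
    by (simp add: sum.reindex[OF inj])
  also have "\<dots> \<le> (\<Sum>j. (1/2) ^ j)"
    using assms(1) by (intro sum_le_suminf summable_geometric) auto
  also have "\<dots> = 2"
    by (simp add: suminf_geometric)
  finally have geometric: "(\<Sum>l\<in>L. (1/2::real) ^ k l) \<le> 2" .
  have "(\<Sum>l\<in>L. 2 powr (1 - real_of_int l)) = 2 powr (1 - real_of_int r) / 2 * (\<Sum>l\<in>L. (1/2) ^ k l)"
    by (simp add: split sum_distrib_left)
  also have "\<dots> \<le> 2 powr (1 - real_of_int r) / 2 * 2"
    using geometric by (intro mult_left_mono) auto
  finally show ?thesis
    by simp
qed

locale cover_trace =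
  fixes b :: "'v \<Rightarrow> rat" and c :: "nat \<Rightarrow> rat" and n :: nat
    and st :: "nat \<Rightarrow> 'v cover_state" and T :: "nat \<Rightarrow> 'v set"
  assumes trace_init: "st 0 = cover_init"
    and trace_effective: "t < n \<Longrightarrow> effective b c t (snd (st t)) (T t)"
    and trace_update: "t < n \<Longrightarrow> st (Suc t) = cover_update b c t (T t) (st t)"
begin

abbreviation level :: "nat \<Rightarrow> int" where
  "level t \<equiv> lev b c t (T t)"

lemma eff_less_level: "t < n \<Longrightarrow> v \<in> T t \<Longrightarrow> snd (st t) v < ereal (real_of_int (level t))"
  using trace_effective unfolding effective_def by blast

lemma eff_Suc:
  "t < n \<Longrightarrow> snd (st (Suc t)) v = (if v \<in> T t then ereal (real_of_int (level t)) else snd (st t) v)"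
  by (simp add: trace_update cover_update_def)

lemma eid_Suc: "t < n \<Longrightarrow> fst (st (Suc t)) v = (if v \<in> T t then Some t else fst (st t) v)"
  by (simp add: trace_update cover_update_def)

lemma eff_mono:
  assumes "t \<le> k" and "k \<le> n"
  shows "snd (st t) v \<le> snd (st k) v"
  using assms(1)
proof (induction k rule: dec_induct)
  case (step m)
  then have "m < n"
    using assms(2) by simp
  then have "snd (st m) v \<le> snd (st (Suc m)) v"
    using eff_Suc[of m v] eff_less_level[of m v] by auto
  with step.IH show ?case
    by simp
qed simp

lemma level_strict_mono:
  assumes "t1 < t2" and "t2 < n" and "v \<in> T t1" and "v \<in> T t2"
  shows "level t1 < level t2"
proof -
  have "ereal (real_of_int (level t1)) = snd (st (Suc t1)) v"
    using assms by (simp add: eff_Suc)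
  also have "\<dots> \<le> snd (st t2) v"
    using assms by (intro eff_mono) auto
  also have "\<dots> < ereal (real_of_int (level t2))"
    using assms by (intro eff_less_level)
  finally show ?thesis
    by simp
qed

lemma eid_Some:
  "k \<le> n \<Longrightarrow> fst (st k) v = Some t \<Longrightarrow> t < k \<and> v \<in> T t \<and> snd (st k) v = ereal (real_of_int (level t))"
proof (induction k)
  case 0
  then show ?case
    by (simp add: trace_init cover_init_def)
next
  case (Suc k)
  then show ?case
    using eid_Suc[of k v] eff_Suc[of k v] by (auto split: if_splits)
qed

lemma S_gt_subset_high_levels:
  "S_gt V es (st n) r \<subseteq> {t. t < n \<and> T t \<noteq> {} \<and> r < level t}"
  using eid_Some[of n] unfolding S_gt_def by fastforce

lemma sum_two_powr_levels_at_vertex_le: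
  "(\<Sum>t | t < n \<and> r < level t \<and> v \<in> T t. 2 powr (1 - real_of_int (level t)))
     \<le> 2 powr (1 - real_of_int r)"
proof -
  let ?A = "{t. t < n \<and> r < level t \<and> v \<in> T t}"
  have "inj_on level ?A"
    by (rule inj_onI) (metis (mono_tags) level_strict_mono less_irrefl mem_Collect_eq nat_neq_iff)
  then have "(\<Sum>t\<in>?A. 2 powr (1 - real_of_int (level t))) = (\<Sum>l\<in>level ` ?A. 2 powr (1 - real_of_int l))"
    by (simp add: sum.reindex)
  also have "\<dots> \<le> 2 powr (1 - real_of_int r)"
    by (rule sum_two_powr_distinct_levels_le) auto
  finally show ?thesis .
qed

lemma charged_benefit_le:
  assumes "finite V" and "\<And>t. t < n \<Longrightarrow> T t \<subseteq> V" and "\<And>v. v \<in> V \<Longrightarrow> 0 \<le> b v"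
  shows "(\<Sum>t | t < n \<and> r < level t. real_of_rat (sum b (T t)) * 2 powr (1 - real_of_int (level t)))
           \<le> real_of_rat (sum b V) * 2 powr (1 - real_of_int r)"
proof -
  let ?A = "{t. t < n \<and> r < level t}"
  let ?w = "\<lambda>t. 2 powr (1 - real_of_int (level t))"
  have "(\<Sum>t\<in>?A. real_of_rat (sum b (T t)) * ?w t)
          = (\<Sum>t\<in>?A. \<Sum>v | v \<in> V \<and> v \<in> T t. real_of_rat (b v) * ?w t)"
  proof (rule sum.cong)
    fix t assume "t \<in> ?A"
    then have "{v. v \<in> V \<and> v \<in> T t} = T t"
      using assms(2) by auto
    then show "real_of_rat (sum b (T t)) * ?w t = (\<Sum>v | v \<in> V \<and> v \<in> T t. real_of_rat (b v) * ?w t)"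
      by (simp add: of_rat_sum sum_distrib_right)
  qed simp
  also have "\<dots> = (\<Sum>v\<in>V. real_of_rat (b v) * (\<Sum>t | t \<in> ?A \<and> v \<in> T t. ?w t))"
    using assms(1) by (simp add: sum.swap_restrict sum_distrib_left)
  also have "\<dots> \<le> (\<Sum>v\<in>V. real_of_rat (b v) * 2 powr (1 - real_of_int r))"
    using assms(3) sum_two_powr_levels_at_vertex_le
    by (intro sum_mono mult_left_mono) (auto simp: conj_assoc)
  finally show ?thesis
    by (simp add: of_rat_sum sum_distrib_right)
qed

lemma cost_of_high_levels_less:
  assumes "finite V" and "V \<noteq> {}" and "\<And>t. t < n \<Longrightarrow> T t \<subseteq> V"
    and "\<And>v. v \<in> V \<Longrightarrow> 0 < b v" and "\<And>t. t < n \<Longrightarrow> 0 < c t"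
  shows "(\<Sum>t | t < n \<and> T t \<noteq> {} \<and> r < level t. real_of_rat (c t))
           < real_of_rat (sum b V) * 2 powr (1 - real_of_int r)"
proof (cases "{t. t < n \<and> T t \<noteq> {} \<and> r < level t} = {}")
  case True
  have "0 < sum b V"
    using assms(1,2,4) by (intro sum_pos) auto
  then show ?thesis
    unfolding True by simp
next
  case False
  have "0 < sum b (T t)" if "t < n" "T t \<noteq> {}" for t
  proof -
    have "finite (T t)"
      using that assms(1,3) finite_subset by blast
    then show ?thesis
      using that assms(3,4) by (intro sum_pos) auto
  qed
  then have "(\<Sum>t | t < n \<and> T t \<noteq> {} \<and> r < level t. real_of_rat (c t))
      < (\<Sum>t | t < n \<and> T t \<noteq> {} \<and> r < level t. real_of_rat (sum b (T t)) * 2 powr (1 - real_of_int (level t)))"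
    using False assms(5) by (intro sum_strict_mono cost_less_benefit_times_two_powr_lev) auto
  also have "\<dots> \<le> (\<Sum>t | t < n \<and> r < level t. real_of_rat (sum b (T t)) * 2 powr (1 - real_of_int (level t)))"
    by (intro sum_mono2) auto
  also have "\<dots> \<le> real_of_rat (sum b V) * 2 powr (1 - real_of_int r)"
    using assms(1,3,4) by (intro charged_benefit_le) (auto simp: less_imp_le)
  finally show ?thesis .
qed

end

theorem corollary10:
  fixes V :: "'v set" and es :: "'v set list" and b :: "'v \<Rightarrow> rat" and c :: "nat \<Rightarrow> rat"
    and st :: "nat \<Rightarrow> 'v cover_state" and r :: int
  assumes "weighted_hypergraph V es b c"
    and "cover_run b c es st"
  shows "real_of_rat (\<Sum>t\<in>S_gt V es (st (length es)) r. c t)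
           < real_of_rat (sum b V) / 2 powr (real_of_int r - 1)"
proof -
  obtain T where sub: "\<And>t. t < length es \<Longrightarrow> T t \<subseteq> es ! t"
    and "\<And>t. t < length es \<Longrightarrow> effective b c t (snd (st t)) (T t)"
    and "\<And>t. t < length es \<Longrightarrow> st (Suc t) = cover_update b c t (T t) (st t)"
    using cover_run_choices[OF assms(2)] by blast
  with assms(2) interpret cover_trace b c "length es" st T
    by unfold_locales (simp_all add: cover_run_def)
  let ?H = "{t. t < length es \<and> T t \<noteq> {} \<and> r < level t}"
  have "real_of_rat (\<Sum>t\<in>S_gt V es (st (length es)) r. c t) \<le> (\<Sum>t\<in>?H. real_of_rat (c t))"
    using assms(1) S_gt_subset_high_levels
    by (auto simp: of_rat_sum weighted_hypergraph_def less_imp_le intro!: sum_mono2)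
  also have "\<dots> < real_of_rat (sum b V) * 2 powr (1 - real_of_int r)"
    using assms(1) sub by (intro cost_of_high_levels_less) (auto simp: weighted_hypergraph_def)
  also have "\<dots> = real_of_rat (sum b V) / 2 powr (real_of_int r - 1)"
    by (simp add: powr_diff)
  finally show ?thesis .
qed

end
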